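(* Given a network $f$ and an input $\mathbf{x} = \langle x_1, \ldots, x_m \rangle$ where $m \geq 2$, the time complexity of $\textsc{binarySequential}(f, \mathbf{x})$ is $2$ calls of $\textsc{checkValid}$ for the best case (all features are irrelevant) and $k_{2m} = 2 \cdot k_m + 1$ or $k_{2m+1} = k_{m+1} + k_m + 1$ calls of $\textsc{checkValid}$ for the worst case (all features are in explanation). When $m = 1$, it needs $1$ $\textsc{checkValid}$ call.
   Context: $f$ is a neural network (classifier or regressor), $\mathbf{x}$ an input with $m$ features, $\epsilon$ a perturbation magnitude and $p$ a norm. The oracle $\textsc{checkValid}(f, \mathbf{x}, \mathbf{x}_S)$ returns True iff every input obtained from $\mathbf{x}$ by perturbing the features in $\mathbf{x}_S$ within $\epsilon$ (in $p$-norm) while keeping all other features fixed yields the same prediction as $\mathbf{x}$ (same class, or output within $\delta$ for regression); features whose perturbation preserves the prediction are called irrelevant, the others form the explanation. The procedure $\textsc{binarySequential}$ maintains global sets $\mathbf{x}_\mathbf{A}$ (explanation) and $\mathbf{x}_\mathbf{B}$ (irrelevant), both initialized to $\emptyset$, and on candidate features $\mathbf{x}_\Theta$ does: if $|\mathbf{x}_\Theta|=1$, call $\textsc{checkValid}(f,\mathbf{x},\mathbf{x}_\mathbf{B}\cup\mathbf{x}_\Theta)$ and add $\mathbf{x}_\Theta$ to $\mathbf{x}_\mathbf{B}$ if True, else to $\mathbf{x}_\mathbf{A}$. Otherwise split $\mathbf{x}_\Theta$ into two consecutive halves $\mathbf{x}_\Phi,\mathbf{x}_\Psi$ (with $|\mathbf{x}_\Phi|=|\mathbf{x}_\Psi|+1$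 when $|\mathbf{x}_\Theta|$ is odd). If $\textsc{checkValid}(f,\mathbf{x},\mathbf{x}_\mathbf{B}\cup\mathbf{x}_\Phi)$ is True: add $\mathbf{x}_\Phi$ to $\mathbf{x}_\mathbf{B}$; then if $\textsc{checkValid}(f,\mathbf{x},\mathbf{x}_\mathbf{B}\cup\mathbf{x}_\Psi)$ is True add $\mathbf{x}_\Psi$ to $\mathbf{x}_\mathbf{B}$, else if $|\mathbf{x}_\Psi|=1$ add it to $\mathbf{x}_\mathbf{A}$, else recurse on $\mathbf{x}_\Psi$. If instead the check on $\mathbf{x}_\Phi$ is False: if $|\mathbf{x}_\Phi|=1$ add it to $\mathbf{x}_\mathbf{A}$, else recurse on $\mathbf{x}_\Phi$; then recurse on $\mathbf{x}_\Psi$. Here $k_m$ denotes the number of $\textsc{checkValid}$ calls in the worst case for an input of $m$ features. *)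

theory Defs
  imports Main
begin

text \<open>Features of the input x = <x_1,...,x_m> are identified with the indices 0..<m.
  Since f, x, epsilon, p (and delta) are fixed, the oracle checkValid(f, x, -) is modelled
  as a black-box predicate cv on sets of feature indices: cv S holds iff perturbing the
  features in S (keeping the others fixed) preserves the prediction.

  bsq cv Theta A B  runs binarySequential on the candidate list Theta with current global
  sets A (explanation) and B (irrelevant) and returns (A', B', number of checkValid calls).\<close>

function bsq :: "(nat set \<Rightarrow> bool) \<Rightarrow> nat list \<Rightarrow> nat set \<Rightarrow> nat set
                   \<Rightarrow> nat set \<times> nat set \<times> nat" where
  "bsq cv th A B =
    (if th = [] then (A, B, 0)
     else if length th = 1 then
       (if cv (B \<union> set th) then (A, B \<union> set th, 1) else (A \<union> set th, B, 1))
     else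
       (let h = (length th + 1) div 2; phi = take h th; psi = drop h th in
        if cv (B \<union> set phi) then
          (let B' = B \<union> set phi in
           if cv (B' \<union> set psi) then (A, B' \<union> set psi, 2)
           else if length psi = 1 then (A \<union> set psi, B', 2)
           else (case bsq cv psi A B' of (A2, B2, c) \<Rightarrow> (A2, B2, c + 2)))
        else
          (case (if length phi = 1 then (A \<union> set phi, B, 0) else bsq cv phi A B) of
             (A1, B1, c1) \<Rightarrow>
               (case bsq cv psi A1 B1 of (A2, B2, c2) \<Rightarrow> (A2, B2, c1 + c2 + 1)))))"
  by pat_completeness auto
termination
  apply (relation "measure (\<lambda>(cv, th, A, B). length th)")
     apply auto
  subgoal for cv th B
  proof -
    assume "th \<noteq> []" "length th \<noteq> Suc 0"
    hence "length th \<ge> 2" by (cases th) (auto simp: Suc_le_eq)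
    thus ?thesis by linarith
  qed
  done

definition binarySequential :: "(nat set \<Rightarrow> bool) \<Rightarrow> nat \<Rightarrow> nat set \<times> nat set \<times> nat" where
  "binarySequential cv m = bsq cv [0..<m] {} {}"

definition calls :: "(nat set \<Rightarrow> bool) \<Rightarrow> nat \<Rightarrow> nat" where
  "calls cv m = snd (snd (binarySequential cv m))"

definition k :: "nat \<Rightarrow> nat" where
  "k m = Max (range (\<lambda>cv. calls cv m))"

text \<open>Oracles arising from checkValid are downward closed: perturbing fewer features
  allows fewer perturbed inputs.\<close>
definition downward_closed :: "(nat set \<Rightarrow> bool) \<Rightarrow> bool" where
  "downward_closed cv \<longleftrightarrow> (\<forall>S T. cv T \<and> S \<subseteq> T \<longrightarrow> cv S)"

end

(* If the whole candidate set is irrelevant, both halves are accepted at once: two calls.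
   Every call on at least two candidates checks the first half and then handles a nonempty
   second half, so it always costs at least two calls.  If every nonempty set of features
   changes the prediction, every half is rejected and the recursion runs through the entire
   halving tree; its cost worst_calls obeys the halving recurrence, and no oracle costs more,
   because accepting a first half spends one call instead of recursing into it.  Hence
   k = worst_calls, and the recurrences for k are those of worst_calls. *)

theory Submission
  imports Defs
begin

declare bsq.simps [simp del]

definition first_half :: "'a list \<Rightarrow> 'a list" where
  "first_half xs = take ((length xs + 1) div 2) xs"

definition second_half :: "'a list \<Rightarrow> 'a list" where
  "second_half xs = drop ((length xs + 1) div 2) xs"

lemma length_first_half [simp]: "length (first_half xs) = (length xs + 1) div 2"
  by (simp add: first_half_def)

lemma length_second_half [simp]: "length (second_half xs) = length xs div 2"
  by (simp add: second_half_def)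

lemma length_halves_bounds:
  assumes "2 \<le> length xs"
  shows "0 < length (first_half xs)" "length (first_half xs) < length xs"
    and "0 < length (second_half xs)" "length (second_half xs) < length xs"
  using assms by auto

lemma set_first_half_Un_second_half: "set (first_half xs) \<union> set (second_half xs) = set xs"
  by (metis first_half_def second_half_def append_take_drop_id set_append)

lemma bsq_Nil: "bsq cv [] A B = (A, B, 0)"
  by (subst bsq.simps) simp

lemma bsq_singleton:
  "length th = 1 \<Longrightarrow>
   bsq cv th A B = (if cv (B \<union> set th) then (A, B \<union> set th, 1) else (A \<union> set th, B, 1))"
  by (subst bsq.simps) auto

lemma bsq_step:
  assumes "2 \<le> length th"
  shows "bsq cv th A B =
    (let phi = first_half th; psi = second_half th in
     if cv (B \<union> set phi) then
       (if cv (B \<union> set phi \<union> set psi) then (A, B \<union> set phi \<union> set psi, 2)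
        else if length psi = 1 then (A \<union> set psi, B \<union> set phi, 2)
        else (case bsq cv psi A (B \<union> set phi) of (A2, B2, c) \<Rightarrow> (A2, B2, c + 2)))
     else
       (case (if length phi = 1 then (A \<union> set phi, B, 0) else bsq cv phi A B) of
          (A1, B1, c1) \<Rightarrow>
            (case bsq cv psi A1 B1 of (A2, B2, c2) \<Rightarrow> (A2, B2, c1 + c2 + 1))))"
proof -
  have "th \<noteq> []" "length th \<noteq> 1" using assms by auto
  then show ?thesis
    unfolding first_half_def second_half_def by (subst bsq.simps) (simp only: if_False Let_def)
qed

lemma bsq_accept_all:
  assumes "2 \<le> length th" "cv (B \<union> set (first_half th))" "cv (B \<union> set th)"
  shows "bsq cv th A B = (A, B \<union> set th, 2)"
proof -
  have halves: "B \<union> set (first_half th) \<union> set (second_half th) = B \<union> set th"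
    using set_first_half_Un_second_half[of th] by blast
  show ?thesis unfolding bsq_step[OF assms(1)] Let_def halves using assms(2,3) by simp
qed

lemma bsq_accept_first_half:
  assumes "2 \<le> length th" "cv (B \<union> set (first_half th))" "\<not> cv (B \<union> set th)"
  shows "bsq cv th A B =
    (if length (second_half th) = 1 then (A \<union> set (second_half th), B \<union> set (first_half th), 2)
     else (case bsq cv (second_half th) A (B \<union> set (first_half th)) of
             (A2, B2, c) \<Rightarrow> (A2, B2, c + 2)))"
proof -
  have "B \<union> set (first_half th) \<union> set (second_half th) = B \<union> set th"
    using set_first_half_Un_second_half[of th] by blast
  then show ?thesis using assms unfolding bsq_step[OF assms(1)] Let_def by simp
qed

lemma bsq_reject_first_half:
  assumes "2 \<le> length th" "\<not> cv (B \<union> set (first_half th))"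
  shows "bsq cv th A B =
    (case (if length (first_half th) = 1 then (A \<union> set (first_half th), B, 0)
           else bsq cv (first_half th) A B) of
       (A1, B1, c1) \<Rightarrow>
         (case bsq cv (second_half th) A1 B1 of (A2, B2, c2) \<Rightarrow> (A2, B2, c1 + c2 + 1)))"
  using assms unfolding bsq_step[OF assms(1)] Let_def by simp

abbreviation bsq_calls :: "(nat set \<Rightarrow> bool) \<Rightarrow> nat list \<Rightarrow> nat set \<Rightarrow> nat set \<Rightarrow> nat" where
  "bsq_calls cv th A B \<equiv> snd (snd (bsq cv th A B))"

lemma bsq_calls_accept_first_half:
  assumes "2 \<le> length th" "cv (B \<union> set (first_half th))" "\<not> cv (B \<union> set th)"
  shows "bsq_calls cv th A B =
    (if length (second_half th) = 1 then 2
     else bsq_calls cv (second_half th) A (B \<union> set (first_half th)) + 2)"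
  using bsq_accept_first_half[of th cv B A, OF assms] by (simp split: prod.split)

lemma bsq_calls_reject_first_half:
  assumes "2 \<le> length th" "\<not> cv (B \<union> set (first_half th))"
  obtains A1 B1 where "bsq_calls cv th A B =
    (if length (first_half th) = 1 then 0 else bsq_calls cv (first_half th) A B)
    + bsq_calls cv (second_half th) A1 B1 + 1"
proof -
  obtain A1 B1 c1 where first: "(if length (first_half th) = 1 then (A \<union> set (first_half th), B, 0)
    else bsq cv (first_half th) A B) = (A1, B1, c1)"
    by (metis prod_cases3)
  then have "bsq_calls cv th A B = c1 + bsq_calls cv (second_half th) A1 B1 + 1"
    using bsq_reject_first_half[of th cv B A, OF assms] by (simp split: prod.split)
  moreover have "c1 = (if length (first_half th) = 1 then 0 else bsq_calls cv (first_half th) A B)"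
    using first by (auto split: if_splits)
  ultimately show ?thesis using that by simp
qed

lemma min_length_le_bsq_calls: "min (length th) 2 \<le> bsq_calls cv th A B"
proof (induction "length th" arbitrary: th A B rule: less_induct)
  case less
  consider "length th \<le> 1" | "2 \<le> length th" by linarith
  then show ?case
  proof cases
    case 1
    then show ?thesis by (cases th) (auto simp: bsq_Nil bsq_singleton)
  next
    case 2
    let ?phi = "first_half th" and ?psi = "second_half th"
    have psi_calls: "1 \<le> bsq_calls cv ?psi A' B'" for A' B'
      using less.hyps[of ?psi A' B'] length_halves_bounds[OF 2] by linarith
    consider "cv (B \<union> set ?phi)" "cv (B \<union> set th)" | "cv (B \<union> set ?phi)" "\<not> cv (B \<union> set th)"
      | "\<not> cv (B \<union> set ?phi)"
      by blast
    then show ?thesis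
    proof cases
      case 1
      then show ?thesis using 2 by (simp add: bsq_accept_all)
    next
      case 3
      obtain A1 B1 where "bsq_calls cv th A B =
        (if length ?phi = 1 then 0 else bsq_calls cv ?phi A B) + bsq_calls cv ?psi A1 B1 + 1"
        using bsq_calls_reject_first_half[of th cv B A, OF 2 3] .
      then show ?thesis using psi_calls[of A1 B1] by simp
    qed (simp add: 2 bsq_calls_accept_first_half)
  qed
qed

(* A rejected first half of length one joins the explanation without a call, so
   worst_calls 2 = 2 rather than 2 * worst_calls 1 + 1. *)
fun worst_calls :: "nat \<Rightarrow> nat" where
  "worst_calls 0 = 0"
| "worst_calls (Suc 0) = 1"
| "worst_calls (Suc (Suc 0)) = 2"
| "worst_calls n = worst_calls ((n + 1) div 2) + worst_calls (n div 2) + 1"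

lemma worst_calls_step:
  assumes "2 \<le> n"
  shows "worst_calls n =
    (if (n + 1) div 2 = 1 then 0 else worst_calls ((n + 1) div 2)) + worst_calls (n div 2) + 1"
  using assms by (cases n rule: worst_calls.cases) auto

lemma le_worst_calls: "n \<le> worst_calls n"
  by (induction n rule: worst_calls.induct) auto

lemma bsq_calls_le_worst_calls: "bsq_calls cv th A B \<le> worst_calls (length th)"
proof (induction "length th" arbitrary: th A B rule: less_induct)
  case less
  consider "length th \<le> 1" | "2 \<le> length th" by linarith
  then show ?case
  proof cases
    case 1
    then show ?thesis by (cases th) (auto simp: bsq_Nil bsq_singleton)
  next
    case 2
    let ?phi = "first_half th" and ?psi = "second_half th"
    have IH: "bsq_calls cv xs A' B' \<le> worst_calls (length xs)" if "xs \<in> {?phi, ?psi}" for xs A' B'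
      using less.hyps[of xs A' B'] length_halves_bounds[OF 2] that by auto
    have step: "worst_calls (length th) =
      (if length ?phi = 1 then 0 else worst_calls (length ?phi)) + worst_calls (length ?psi) + 1"
      using worst_calls_step[OF 2] by simp
    consider "cv (B \<union> set ?phi)" "cv (B \<union> set th)" | "cv (B \<union> set ?phi)" "\<not> cv (B \<union> set th)"
      | "\<not> cv (B \<union> set ?phi)"
      by blast
    then show ?thesis
    proof cases
      case 1
      then show ?thesis using 2 le_worst_calls[of "length th"] by (simp add: bsq_accept_all)
    next
      case 2
      have "bsq_calls cv th A B =
        (if length ?psi = 1 then 2 else bsq_calls cv ?psi A (B \<union> set ?phi) + 2)"
        using bsq_calls_accept_first_half[of th cv B A, OF \<open>2 \<le> length th\<close> 2] .
      then show ?thesis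
        using step IH[of ?psi A "B \<union> set ?phi"] le_worst_calls[of "length th"]
          le_worst_calls[of "length ?phi"] length_halves_bounds[OF \<open>2 \<le> length th\<close>]
        by auto
    next
      case 3
      obtain A1 B1 where "bsq_calls cv th A B =
        (if length ?phi = 1 then 0 else bsq_calls cv ?phi A B) + bsq_calls cv ?psi A1 B1 + 1"
        using bsq_calls_reject_first_half[of th cv B A, OF \<open>2 \<le> length th\<close> 3] .
      then show ?thesis using step IH[of ?phi A B] IH[of ?psi A1 B1] by simp
    qed
  qed
qed

lemma bsq_rejecting:
  assumes rejects: "\<And>S. S \<noteq> {} \<Longrightarrow> S \<subseteq> U \<Longrightarrow> \<not> cv S"
  shows "set th \<subseteq> U \<Longrightarrow> B \<subseteq> U \<Longrightarrow> bsq cv th A B = (A \<union> set th, B, worst_calls (length th))"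
proof (induction "length th" arbitrary: th A B rule: less_induct)
  case less
  consider "length th \<le> 1" | "2 \<le> length th" by linarith
  then show ?case
  proof cases
    case 1
    then show ?thesis using rejects[of "B \<union> set th"] less.prems
      by (cases th) (auto simp: bsq_Nil bsq_singleton)
  next
    case 2
    let ?phi = "first_half th" and ?psi = "second_half th"
    have halves: "set ?phi \<union> set ?psi = set th"
      by (rule set_first_half_Un_second_half)
    then have subsets: "set ?phi \<subseteq> U" "set ?psi \<subseteq> U"
      using less.prems(1) by auto
    have IH: "bsq cv xs A' B' = (A' \<union> set xs, B', worst_calls (length xs))"
      if "xs \<in> {?phi, ?psi}" "B' \<subseteq> U" for xs A' B'
      using less.hyps[of xs B' A'] length_halves_bounds[OF 2] subsets that by auto
    have "?phi \<noteq> []"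
      using length_halves_bounds(1)[OF 2] by (metis length_greater_0_conv)
    then have "\<not> cv (B \<union> set ?phi)"
      using rejects[of "B \<union> set ?phi"] subsets less.prems(2) by auto
    then have "bsq cv th A B =
      (case (if length ?phi = 1 then (A \<union> set ?phi, B, 0) else bsq cv ?phi A B) of
         (A1, B1, c1) \<Rightarrow> (case bsq cv ?psi A1 B1 of (A2, B2, c2) \<Rightarrow> (A2, B2, c1 + c2 + 1)))"
      by (rule bsq_reject_first_half[OF 2])
    then show ?thesis
      using IH[of ?phi B A] IH[of ?psi B "A \<union> set ?phi"] worst_calls_step[OF 2] halves less.prems
      by (auto simp: Un_assoc)
  qed
qed

lemma calls_accepting:
  assumes "downward_closed cv" "cv {..<m}" "2 \<le> m"
  shows "calls cv m = 2"
proof -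
  have features: "set [0..<m] = {..<m}" by auto
  then have "cv (set (first_half [0..<m]))"
    using assms(1,2) set_first_half_Un_second_half[of "[0..<m]"]
    unfolding downward_closed_def by blast
  then show ?thesis
    using bsq_accept_all[of "[0..<m]" cv "{}" "{}"] assms(2,3) features
    by (simp add: calls_def binarySequential_def)
qed

lemma two_le_calls: "2 \<le> m \<Longrightarrow> 2 \<le> calls cv m"
  using min_length_le_bsq_calls[of "[0..<m]" cv "{}" "{}"]
  by (simp add: calls_def binarySequential_def)

lemma calls_rejecting:
  assumes "downward_closed cv" "\<forall>i<m. \<not> cv {i}"
  shows "calls cv m = worst_calls m"
proof -
  have "\<not> cv S" if nonempty: "S \<noteq> {}" and features: "S \<subseteq> {..<m}" for S
  proof -
    obtain i where "i \<in> S" using nonempty by blast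
    then show ?thesis using assms features unfolding downward_closed_def by blast
  qed
  then show ?thesis
    using bsq_rejecting[of "{..<m}" cv "[0..<m]" "{}" "{}"]
    by (simp add: calls_def binarySequential_def atLeast0LessThan)
qed

lemma calls_le_worst_calls: "calls cv m \<le> worst_calls m"
  using bsq_calls_le_worst_calls[of cv "[0..<m]" "{}" "{}"]
  by (simp add: calls_def binarySequential_def)

lemma k_eq_worst_calls: "k m = worst_calls m"
  unfolding k_def
proof (rule Max_eqI)
  show "finite (range (\<lambda>cv. calls cv m))"
    by (rule finite_subset[of _ "{..worst_calls m}"]) (auto simp: calls_le_worst_calls)
  show "y \<le> worst_calls m" if "y \<in> range (\<lambda>cv. calls cv m)" for y
    using that calls_le_worst_calls by auto
  have "calls (\<lambda>_. False) m = worst_calls m"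
    by (rule calls_rejecting) (simp_all add: downward_closed_def)
  then show "worst_calls m \<in> range (\<lambda>cv. calls cv m)"
    by (metis rangeI)
qed

lemma worst_calls_double: "2 \<le> m \<Longrightarrow> worst_calls (2 * m) = 2 * worst_calls m + 1"
  using worst_calls_step[of "2 * m"] by simp

lemma worst_calls_double_Suc:
  "1 \<le> m \<Longrightarrow> worst_calls (2 * m + 1) = worst_calls (m + 1) + worst_calls m + 1"
  using worst_calls_step[of "2 * m + 1"] by simp

lemma calls_one: "calls cv 1 = 1"
  by (simp add: calls_def binarySequential_def bsq_singleton)

theorem theorem1:
  shows
  "(\<forall>m\<ge>2. \<forall>cv. downward_closed cv \<longrightarrow>
      cv {..<m} \<longrightarrow> calls cv m = 2)
   \<and> (\<forall>m\<ge>2. \<forall>cv. 2 \<le> calls cv m)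
   \<and> (\<forall>m\<ge>2. \<forall>cv. downward_closed cv \<longrightarrow> (\<forall>i<m. \<not> cv {i}) \<longrightarrow> calls cv m = k m)
   \<and> (\<forall>m\<ge>2. k (2 * m) = 2 * k m + 1 \<and> k (2 * m + 1) = k (m + 1) + k m + 1)
   \<and> (\<forall>cv. calls cv 1 = 1)"
proof (intro conjI allI impI)
  fix m :: nat
  assume "2 \<le> m"
  then show "k (2 * m) = 2 * k m + 1" "k (2 * m + 1) = k (m + 1) + k m + 1"
    using worst_calls_double[of m] worst_calls_double_Suc[of m] by (simp_all add: k_eq_worst_calls)
next
  show "calls cv 1 = 1" for cv by (rule calls_one)
qed (simp_all add: calls_accepting two_le_calls calls_rejecting k_eq_worst_calls)

end
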